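(* Let $\nu\colon[0,1]\to\mathbb{R}$ be a $C^\infty$ map which is nowhere infinitely flat on $(0,1)$. Then $\nu$ can be approximated arbitrarily well in the $C^\infty$ topology by $C^\infty$ maps $\tilde\nu\colon[0,1]\to\mathbb{R}$ which are nowhere infinitely flat on $(0,1)$, have the same $\infty$-jets as $\nu$ at $0$ and $1$, and have finitely many zeros.
   Context: A map is infinitely flat at a point if all its derivatives (including the value) vanish there. *)

theory Defs
  imports "HOL-Analysis.Analysis"
begin

text \<open>Since [0,1] has no isolated
  points, the D j are uniquely determined on [0,1].\<close>
definition smooth_derivs_01 :: "(real \<Rightarrow> real) \<Rightarrow> (nat \<Rightarrow> real \<Rightarrow> real) \<Rightarrow> bool" where
  "smooth_derivs_01 f D \<longleftrightarrow>
     (\<forall>x\<in>{0..1}. D 0 x = f x) \<and>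
     (\<forall>j. \<forall>x\<in>{0..1}. (D j has_real_derivative D (Suc j) x) (at x within {0..1}))"

definition inf_flat_at :: "(nat \<Rightarrow> real \<Rightarrow> real) \<Rightarrow> real \<Rightarrow> bool" where
  "inf_flat_at D x \<longleftrightarrow> (\<forall>j. D j x = 0)"

end

theory Submission
  imports Defs "HOL-Computational_Algebra.Polynomial"
begin

text \<open>Zeros of a smooth function cannot accumulate at a point where it is not infinitely flat:
  by Rolle's theorem an accumulation point of zeros of the \<open>j\<close>-th derivative is also one of zeros
  of the \<open>(j+1)\<close>-st, so it is a zero of every derivative. Hence only endpoints where \<open>\<nu>\<close> is flat need care.
  If \<open>\<nu>\<close> is flat at \<open>0\<close>, blend it with \<open>t * exp (-1/x)\<close> by a cutoff living on \<open>[0, 2a]\<close>.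
  Since both functions are flat at \<open>0\<close>, the blend is \<open>O(a)\<close>-close to \<open>\<nu>\<close> in \<open>C\<^sup>k\<close>, has the same
  jet at \<open>0\<close> and is positive on \<open>(0, a]\<close>. On \<open>(0, 2a)\<close> it has the form \<open>A + t B\<close> with \<open>B > 0\<close>,
  and a common zero of it and its derivative is a critical point of \<open>-A/B\<close> with value \<open>t\<close>;
  by the one-dimensional Sard theorem some \<open>t \<in> [1, 2]\<close> avoids all critical values, so the blend
  has no new flat points. Treating \<open>1\<close> in the same way after the reflection \<open>x \<mapsto> 1 - x\<close>, the
  zeros of the result accumulate nowhere in \<open>[0, 1]\<close> and are therefore finite.\<close>

section \<open>Sequences of derivatives\<close>

definition deriv_seq_on :: "real set \<Rightarrow> (nat \<Rightarrow> real \<Rightarrow> real) \<Rightarrow> bool" where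
  "deriv_seq_on S F \<longleftrightarrow> (\<forall>j. \<forall>x\<in>S. (F j has_real_derivative F (Suc j) x) (at x within S))"

lemma deriv_seq_onD:
  "deriv_seq_on S F \<Longrightarrow> x \<in> S \<Longrightarrow> (F j has_real_derivative F (Suc j) x) (at x within S)"
  by (simp add: deriv_seq_on_def)

lemma deriv_seq_on_interior:
  "deriv_seq_on S F \<Longrightarrow> x \<in> interior S \<Longrightarrow> (F j has_real_derivative F (Suc j) x) (at x)"
  by (metis at_within_interior deriv_seq_onD interior_subset subsetD)

lemma deriv_seq_on_subset: "deriv_seq_on T F \<Longrightarrow> S \<subseteq> T \<Longrightarrow> deriv_seq_on S F"
  unfolding deriv_seq_on_def by (meson has_field_derivative_subset subsetD)

lemma deriv_seq_on_continuous_on: "deriv_seq_on S F \<Longrightarrow> continuous_on S (F j)"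
  unfolding deriv_seq_on_def by (meson DERIV_continuous continuous_on_eq_continuous_within)

lemma deriv_seq_on_add: "deriv_seq_on S F \<Longrightarrow> deriv_seq_on S G \<Longrightarrow> deriv_seq_on S (\<lambda>j x. F j x + G j x)"
  unfolding deriv_seq_on_def by (auto intro!: derivative_eq_intros)

lemma deriv_seq_on_diff: "deriv_seq_on S F \<Longrightarrow> deriv_seq_on S G \<Longrightarrow> deriv_seq_on S (\<lambda>j x. F j x - G j x)"
  unfolding deriv_seq_on_def by (auto intro!: derivative_eq_intros)

lemma deriv_seq_on_cmult: "deriv_seq_on S F \<Longrightarrow> deriv_seq_on S (\<lambda>j x. c * F j x)"
  unfolding deriv_seq_on_def by (auto intro!: derivative_eq_intros)

lemma deriv_seq_on_affine:
  assumes F: "deriv_seq_on T F" and S: "(\<lambda>x. c * x + d) ` S \<subseteq> T"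
  shows "deriv_seq_on S (\<lambda>j x. c ^ j * F j (c * x + d))"
  unfolding deriv_seq_on_def
proof (intro allI ballI)
  fix j x assume x: "x \<in> S"
  have "(F j has_real_derivative F (Suc j) (c * x + d)) (at (c * x + d) within (\<lambda>x. c * x + d) ` S)"
    using deriv_seq_onD[OF F] S x by (blast intro: has_field_derivative_subset)
  moreover have "((\<lambda>x. c * x + d) has_real_derivative c) (at x within S)"
    by (auto intro!: derivative_eq_intros)
  ultimately have "(F j \<circ> (\<lambda>x. c * x + d) has_real_derivative F (Suc j) (c * x + d) * c) (at x within S)"
    by (rule DERIV_image_chain)
  then show "((\<lambda>x. c ^ j * F j (c * x + d)) has_real_derivative c ^ Suc j * F (Suc j) (c * x + d)) (at x within S)"
    by (auto intro!: derivative_eq_intros simp: o_def algebra_simps)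
qed

definition leibniz_prod :: "(nat \<Rightarrow> real \<Rightarrow> real) \<Rightarrow> (nat \<Rightarrow> real \<Rightarrow> real) \<Rightarrow> nat \<Rightarrow> real \<Rightarrow> real" where
  "leibniz_prod F G j x = (\<Sum>i = 0..j. real (j choose i) * F i x * G (j - i) x)"

lemma leibniz_prod_0 [simp]: "leibniz_prod F G 0 x = F 0 x * G 0 x"
  by (simp add: leibniz_prod_def)

lemma leibniz_prod_cmult_diff:
  "leibniz_prod F (\<lambda>j x. c * G j x - H j x) j x = c * leibniz_prod F G j x - leibniz_prod F H j x"
  by (simp add: leibniz_prod_def sum_distrib_left algebra_simps flip: sum_subtractf)

lemma pascal_sum_Suc:
  fixes F G :: "nat \<Rightarrow> real"
  shows "(\<Sum>i = 0..n. real (n choose i) * (F (Suc i) * G (n - i) + F i * G (Suc (n - i)))) =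
         (\<Sum>i = 0..Suc n. real (Suc n choose i) * F i * G (Suc n - i))"
proof -
  have "(\<Sum>i = 0..n. real (n choose i) * F i * G (Suc (n - i))) =
        (\<Sum>i = 0..Suc n. real (n choose i) * F i * G (Suc n - i))"
    by (simp add: sum.atLeast0_atMost_Suc Suc_diff_le)
  also have "\<dots> = F 0 * G (Suc n) + (\<Sum>i = 0..n. real (n choose Suc i) * F (Suc i) * G (n - i))"
    by (subst sum.atLeast0_atMost_Suc_shift) simp
  finally have right: "(\<Sum>i = 0..n. real (n choose i) * F i * G (Suc (n - i))) =
      F 0 * G (Suc n) + (\<Sum>i = 0..n. real (n choose Suc i) * F (Suc i) * G (n - i))" .
  have "(\<Sum>i = 0..Suc n. real (Suc n choose i) * F i * G (Suc n - i)) =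
        F 0 * G (Suc n) + (\<Sum>i = 0..n. real (Suc n choose Suc i) * F (Suc i) * G (n - i))"
    by (subst sum.atLeast0_atMost_Suc_shift) simp
  then show ?thesis
    using right by (simp add: sum.distrib algebra_simps)
qed

lemma deriv_seq_on_leibniz_prod:
  assumes F: "deriv_seq_on S F" and G: "deriv_seq_on S G"
  shows "deriv_seq_on S (leibniz_prod F G)"
  unfolding deriv_seq_on_def
proof (intro allI ballI)
  fix j x assume x: "x \<in> S"
  have "(leibniz_prod F G j has_real_derivative
        (\<Sum>i = 0..j. real (j choose i) * (F (Suc i) x * G (j - i) x + F i x * G (Suc (j - i)) x))) (at x within S)"
    unfolding leibniz_prod_def
    by (rule derivative_eq_intros deriv_seq_onD[OF F x] deriv_seq_onD[OF G x] refl | simp)+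
      (simp add: algebra_simps)
  then show "(leibniz_prod F G j has_real_derivative leibniz_prod F G (Suc j) x) (at x within S)"
    using pascal_sum_Suc[of j "\<lambda>i. F i x" "\<lambda>i. G i x"] by (simp add: leibniz_prod_def)
qed

lemma deriv_seq_bounded_on_compact:
  assumes "deriv_seq_on S F" "compact S"
  shows "\<exists>M\<ge>0. \<forall>j\<le>k. \<forall>x\<in>S. \<bar>F j x\<bar> \<le> M"
proof -
  have "\<exists>M. \<forall>x\<in>S. \<bar>F j x\<bar> \<le> M" for j
    using compact_imp_bounded[OF compact_continuous_image[OF deriv_seq_on_continuous_on[OF assms(1)] assms(2)]]
    by (auto simp: bounded_iff)
  then obtain M where M: "\<And>j x. x \<in> S \<Longrightarrow> \<bar>F j x\<bar> \<le> M j" by metis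
  have "\<bar>F j x\<bar> \<le> (\<Sum>i\<le>k. \<bar>M i\<bar>)" if "j \<le> k" "x \<in> S" for j x
  proof -
    have "\<bar>M j\<bar> \<le> (\<Sum>i\<le>k. \<bar>M i\<bar>)"
      using that(1) by (intro member_le_sum) auto
    then show ?thesis
      using M[OF that(2), of j] by linarith
  qed
  then show ?thesis
    by (intro exI[of _ "\<Sum>i\<le>k. \<bar>M i\<bar>"]) (auto intro: sum_nonneg)
qed

section \<open>The flat function \<open>exp (-1/x)\<close> and a smooth step\<close>

lemma poly_times_exp_neg_tendsto_0: "((\<lambda>z::real. poly p z * exp (-z)) \<longlongrightarrow> 0) at_top"
proof -
  have "((\<lambda>z::real. \<Sum>i\<le>degree p. coeff p i * (z ^ i / exp z)) \<longlongrightarrow> (\<Sum>i\<le>degree p. coeff p i * 0)) at_top"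
    by (intro tendsto_sum tendsto_mult tendsto_const tendsto_power_div_exp_0)
  then show ?thesis
    by (simp add: poly_altdef sum_divide_distrib exp_minus field_simps)
qed

text \<open>The \<open>j\<close>-th derivative of \<open>exp (-1/x)\<close> is \<open>p\<^sub>j (1/x) * exp (-1/x)\<close>, and
  \<open>d/dx (p (1/x) * exp (-1/x)) = (1/x)\<^sup>2 * (p - p') (1/x) * exp (-1/x)\<close>.\<close>
fun flat_exp_poly :: "nat \<Rightarrow> real poly" where
  "flat_exp_poly 0 = 1"
| "flat_exp_poly (Suc j) = [:0, 0, 1:] * (flat_exp_poly j - pderiv (flat_exp_poly j))"

definition flat_exp :: "nat \<Rightarrow> real \<Rightarrow> real" where
  "flat_exp j x = (if x > 0 then poly (flat_exp_poly j) (1/x) * exp (-1/x) else 0)"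

lemma flat_exp_pos: "x > 0 \<Longrightarrow> flat_exp 0 x > 0"
  by (simp add: flat_exp_def)

lemma flat_exp_nonpos: "x \<le> 0 \<Longrightarrow> flat_exp j x = 0"
  by (simp add: flat_exp_def)

lemma inf_flat_at_flat_exp_0: "inf_flat_at flat_exp 0"
  by (simp add: inf_flat_at_def flat_exp_nonpos)

lemma flat_exp_deriv_pos:
  assumes "x > 0" shows "(flat_exp j has_real_derivative flat_exp (Suc j) x) (at x)"
proof -
  have "((\<lambda>x. poly (flat_exp_poly j) (1/x) * exp (-1/x)) has_real_derivative
        poly (pderiv (flat_exp_poly j)) (1/x) * (- 1 / x\<^sup>2) * exp (-1/x)
          + poly (flat_exp_poly j) (1/x) * (exp (-1/x) * (1/x\<^sup>2))) (at x)"
    using assms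
    by (intro derivative_eq_intros DERIV_chain2[OF poly_DERIV]) (auto simp: power2_eq_square)
  also have "poly (pderiv (flat_exp_poly j)) (1/x) * (- 1 / x\<^sup>2) * exp (-1/x)
      + poly (flat_exp_poly j) (1/x) * (exp (-1/x) * (1/x\<^sup>2)) = flat_exp (Suc j) x"
    using assms by (simp add: flat_exp_def algebra_simps power2_eq_square)
  finally show ?thesis
    by (rule has_field_derivative_transform_within_open[of _ _ _ "{0<..}"])
      (use assms in \<open>auto simp: flat_exp_def\<close>)
qed

lemma flat_exp_deriv_neg:
  assumes "x < 0" shows "(flat_exp j has_real_derivative flat_exp (Suc j) x) (at x)"
proof -
  have "((\<lambda>_. 0) has_real_derivative 0) (at x)" by simp
  then have "(flat_exp j has_real_derivative 0) (at x)"
    by (rule has_field_derivative_transform_within_open[of _ _ _ "{..<0}"])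
      (use assms in \<open>auto simp: flat_exp_def\<close>)
  then show ?thesis
    using assms by (simp add: flat_exp_def)
qed

lemma flat_exp_deriv_0: "(flat_exp j has_real_derivative flat_exp (Suc j) 0) (at 0)"
proof -
  have "((\<lambda>z. poly (pCons 0 (flat_exp_poly j)) z * exp (-z)) \<longlongrightarrow> 0) at_top"
    by (rule poly_times_exp_neg_tendsto_0)
  moreover have "\<forall>\<^sub>F z in at_top. poly (pCons 0 (flat_exp_poly j)) z * exp (-z) = flat_exp j (inverse z) / inverse z"
    using eventually_gt_at_top[of 0] by eventually_elim (simp add: flat_exp_def divide_inverse)
  ultimately have "((\<lambda>z. flat_exp j (inverse z) / inverse z) \<longlongrightarrow> 0) at_top"
    using tendsto_cong by fastforce
  then have right: "((\<lambda>y. flat_exp j y / y) \<longlongrightarrow> 0) (at_right 0)"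
    by (rule filterlim_at_right_to_top[THEN iffD2])
  have "\<forall>\<^sub>F y in at_left (0::real). flat_exp j y / y = 0"
    by (rule eventually_at_leftI[of "-1"]) (auto simp: flat_exp_def)
  then have left: "((\<lambda>y. flat_exp j y / y) \<longlongrightarrow> 0) (at_left 0)"
    by (simp add: tendsto_eventually)
  have "((\<lambda>y. (flat_exp j y - flat_exp j 0) / (y - 0)) \<longlongrightarrow> 0) (at 0)"
    using filterlim_split_at[OF left right] by (simp add: flat_exp_def)
  then show ?thesis by (simp add: has_field_derivative_iff flat_exp_def)
qed

lemma deriv_seq_on_flat_exp: "deriv_seq_on S flat_exp"
proof -
  have "(flat_exp j has_real_derivative flat_exp (Suc j) x) (at x)" for j x
    using flat_exp_deriv_0 flat_exp_deriv_neg flat_exp_deriv_pos by (cases x "0::real" rule: linorder_cases) auto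
  then show ?thesis
    by (simp add: deriv_seq_on_def has_field_derivative_at_within)
qed

definition bump :: "nat \<Rightarrow> real \<Rightarrow> real" where
  "bump = leibniz_prod flat_exp (\<lambda>j x. (- 1) ^ j * flat_exp j ((- 1) * x + 1))"

lemma deriv_seq_on_bump: "deriv_seq_on S bump"
  unfolding bump_def
  by (intro deriv_seq_on_leibniz_prod deriv_seq_on_affine[where T = UNIV] deriv_seq_on_flat_exp) auto

lemma bump_outside: "x \<le> 0 \<or> 1 \<le> x \<Longrightarrow> bump j x = 0"
  by (auto simp: bump_def leibniz_prod_def flat_exp_nonpos intro!: sum.neutral)

lemma bump_pos: "0 < x \<Longrightarrow> x < 1 \<Longrightarrow> bump 0 x > 0"
  by (simp add: bump_def flat_exp_pos)

definition bump_primitive :: "real \<Rightarrow> real" where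
  "bump_primitive x = integral {-1..x} (bump 0)"

lemma bump_primitive_nonpos: "x \<le> 0 \<Longrightarrow> bump_primitive x = 0"
proof (cases "x < -1")
  case False
  assume "x \<le> 0"
  have "integral {-1..x} (bump 0) = integral {-1..x} (\<lambda>_. 0)"
    by (rule integral_cong) (use \<open>x \<le> 0\<close> in \<open>auto simp: bump_outside\<close>)
  then show ?thesis by (simp add: bump_primitive_def)
qed (simp add: bump_primitive_def)

lemma bump_primitive_deriv: "(bump_primitive has_real_derivative bump 0 x) (at x)"
proof (cases "x < 0")
  case True
  have "((\<lambda>_. 0) has_real_derivative 0) (at x)" by simp
  then have "(bump_primitive has_real_derivative 0) (at x)"
    by (rule has_field_derivative_transform_within_open[of _ _ _ "{..<0}"])
      (use True in \<open>auto simp: bump_primitive_nonpos\<close>)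
  then show ?thesis using True by (simp add: bump_outside)
next
  case False
  have "(bump_primitive has_real_derivative bump 0 x) (at x within {-1..x+1})"
    unfolding bump_primitive_def
    by (rule integral_has_real_derivative[OF deriv_seq_on_continuous_on[OF deriv_seq_on_bump]])
      (use False in auto)
  moreover have "at x within {-1..x+1} = at x"
    by (rule at_within_interior) (use False in auto)
  ultimately show ?thesis by simp
qed

lemma bump_primitive_less_1:
  assumes "x < 1" shows "bump_primitive x < bump_primitive 1"
proof -
  obtain z where z: "max x 0 < z" "z < 1"
      "bump_primitive 1 - bump_primitive (max x 0) = (1 - max x 0) * bump 0 z"
    using MVT2[of "max x 0" 1 bump_primitive "bump 0"] bump_primitive_deriv assms by auto
  moreover have "(1 - max x 0) * bump 0 z > 0"
    using z bump_pos[of z] assms by simp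
  ultimately have "bump_primitive (max x 0) < bump_primitive 1"
    by linarith
  then show ?thesis
    by (cases "x \<le> 0") (auto simp: bump_primitive_nonpos)
qed

lemma bump_primitive_ge_1:
  assumes "1 \<le> x" shows "bump_primitive x = bump_primitive 1"
proof (cases "x = 1")
  case False
  then obtain z where "1 < z" "bump_primitive x - bump_primitive 1 = (x - 1) * bump 0 z"
    using MVT2[of 1 x bump_primitive "bump 0"] bump_primitive_deriv assms by auto
  then show ?thesis by (simp add: bump_outside)
qed simp

lemma bump_primitive_1_pos: "bump_primitive 1 > 0"
  using bump_primitive_less_1[of 0] by (simp add: bump_primitive_nonpos)

definition smooth_step :: "nat \<Rightarrow> real \<Rightarrow> real" where
  "smooth_step j x =
     (if j = 0 then 1 - bump_primitive x / bump_primitive 1 else - bump (j - 1) x / bump_primitive 1)"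

lemma deriv_seq_on_smooth_step: "deriv_seq_on S smooth_step"
proof -
  have "(smooth_step j has_real_derivative smooth_step (Suc j) x) (at x)" for j x
  proof (cases j)
    case 0
    then show ?thesis
      unfolding smooth_step_def using bump_primitive_1_pos
      by (auto intro!: derivative_eq_intros bump_primitive_deriv)
  next
    case (Suc i)
    then show ?thesis
      unfolding smooth_step_def using bump_primitive_1_pos deriv_seq_onD[OF deriv_seq_on_bump, of x UNIV i]
      by (auto intro!: derivative_eq_intros)
  qed
  then show ?thesis
    by (simp add: deriv_seq_on_def has_field_derivative_at_within)
qed

lemma smooth_step_nonpos: "x \<le> 0 \<Longrightarrow> smooth_step j x = (if j = 0 then 1 else 0)"
  by (simp add: smooth_step_def bump_primitive_nonpos bump_outside)

lemma smooth_step_ge_1: "1 \<le> x \<Longrightarrow> smooth_step j x = 0"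
  using bump_primitive_1_pos bump_primitive_ge_1[of x] by (simp add: smooth_step_def bump_outside)

lemma smooth_step_pos: "x < 1 \<Longrightarrow> smooth_step 0 x > 0"
  using bump_primitive_less_1[of x] bump_primitive_1_pos by (simp add: smooth_step_def divide_less_eq)

section \<open>Sard's theorem on the line and accumulation of zeros\<close>

lemma negligible_critical_values:
  fixes F F' :: "real \<Rightarrow> real"
  assumes der: "\<And>x. x \<in> S \<Longrightarrow> (F has_real_derivative F' x) (at x within S)"
  shows "negligible (F ` {x\<in>S. F' x = 0})"
proof -
  define T where "T = {x\<in>S. F' x = 0}"
  define V where "V = (vec :: real \<Rightarrow> real^1) ` T"
  define g where "g = (\<lambda>v::real^1. vec (F (v $ 1)) :: real^1)"
  have "negligible (g ` V)"
  proof (rule baby_Sard[where f' = "\<lambda>_ _. 0"])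
    fix v assume "v \<in> V"
    then obtain x where x: "x \<in> T" "v = vec x" by (auto simp: V_def)
    have "(F has_real_derivative 0) (at x within T)"
      using der[of x] x(1) by (auto simp: T_def intro: has_field_derivative_subset)
    then have "(F has_derivative (\<lambda>_. 0)) (at ((\<lambda>v::real^1. v $ 1) v) within (\<lambda>v. v $ 1) ` V)"
      using x by (simp add: V_def image_image has_field_derivative_def mult_zero_left[abs_def])
    moreover have "bounded_linear (vec :: real \<Rightarrow> real^1)"
      by (simp flip: linear_conv_bounded_linear)
    ultimately have "((\<lambda>r. vec r :: real^1) \<circ> (F \<circ> (\<lambda>v::real^1. v $ 1)) has_derivative
        (\<lambda>r. vec r) \<circ> ((\<lambda>_. 0) \<circ> (\<lambda>h. h $ 1))) (at v within V)"
      by (intro diff_chain_within bounded_linear_imp_has_derivative bounded_linear_vec_nth)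
    then show "(g has_derivative (\<lambda>_. 0)) (at v within V)"
      by (simp add: g_def o_def)
  next
    have "matrix (\<lambda>h::real^1. 0::real^1) = 0" by (simp add: matrix_def vec_eq_iff)
    then show "rank (matrix (\<lambda>h::real^1. 0::real^1)) < CARD(1)" by simp
  qed simp
  moreover have "F ` T = (\<lambda>w::real^1. w $ 1) ` g ` V"
    by (auto simp: g_def V_def image_image)
  ultimately have "negligible ((\<lambda>w::real^1. w $ 1) ` g ` V)"
    by (intro negligible_differentiable_image_negligible[of "g ` V"])
      (auto intro!: bounded_linear_imp_differentiable_on bounded_linear_vec_nth)
  then show ?thesis
    using \<open>F ` T = _\<close> by (simp add: T_def)
qed

lemma exists_parameter_no_double_zero:
  fixes A B A' B' :: "real \<Rightarrow> real"
  assumes A: "\<And>x. x \<in> S \<Longrightarrow> (A has_real_derivative A' x) (at x within S)"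
    and B: "\<And>x. x \<in> S \<Longrightarrow> (B has_real_derivative B' x) (at x within S)"
    and B_nz: "\<And>x. x \<in> S \<Longrightarrow> B x \<noteq> 0" and "a < b"
  shows "\<exists>t\<in>{a..b}. \<forall>x\<in>S. A x + t * B x = 0 \<longrightarrow> A' x + t * B' x \<noteq> 0"
proof -
  define F' where "F' x = (A x * B' x - A' x * B x) / (B x)\<^sup>2" for x
  have "((\<lambda>x. - A x / B x) has_real_derivative F' x) (at x within S)" if "x \<in> S" for x
    using B_nz[OF that]
    by (auto intro!: derivative_eq_intros A B that simp: F'_def power2_eq_square field_simps)
  then have "negligible ((\<lambda>x. - A x / B x) ` {x\<in>S. F' x = 0})"
    by (rule negligible_critical_values)
  moreover have "\<not> negligible {a..b}"
    using negligible_interval(1)[of a b] \<open>a < b\<close> by simp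
  ultimately obtain t where t: "t \<in> {a..b}" "t \<notin> (\<lambda>x. - A x / B x) ` {x\<in>S. F' x = 0}"
    using negligible_subset by blast
  have "A' x + t * B' x \<noteq> 0" if x: "x \<in> S" "A x + t * B x = 0" for x
  proof -
    have "- A x / B x = t"
      using x B_nz by (simp add: field_simps)
    then have "F' x \<noteq> 0"
      using t x by force
    moreover have "F' x = - (A' x + t * B' x) / B x"
      using x B_nz[of x] by (simp add: F'_def eq_neg_iff_add_eq_0[symmetric] power2_eq_square field_simps)
    ultimately show ?thesis by auto
  qed
  then show ?thesis
    using t by blast
qed

lemma islimpt_between:
  fixes x :: real
  assumes "x islimpt Z" and between: "\<And>p q. p \<in> Z \<Longrightarrow> q \<in> Z \<Longrightarrow> p < q \<Longrightarrow> \<exists>z\<in>W. p < z \<and> z < q"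
  shows "x islimpt W"
  unfolding islimpt_approachable
proof (intro allI impI)
  fix e :: real assume "e > 0"
  have "Z \<subseteq> insert x ((Z \<inter> {..<x}) \<union> (Z \<inter> {x<..}))" by auto
  then have "x islimpt insert x ((Z \<inter> {..<x}) \<union> (Z \<inter> {x<..}))"
    by (rule islimpt_subset[OF assms(1)])
  then have "x islimpt (Z \<inter> {..<x}) \<or> x islimpt (Z \<inter> {x<..})" by (simp add: islimpt_insert islimpt_Un)
  then obtain p q where pq: "p \<in> Z" "q \<in> Z" "p < q" "x < p \<or> q < x" "x - e < p" "q < x + e"
  proof
    assume left: "x islimpt (Z \<inter> {..<x})"
    then obtain p where p: "p \<in> Z" "p < x" "x - p < e"
      using \<open>e > 0\<close> by (auto simp: islimpt_approachable dist_real_def)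
    moreover obtain q where "q \<in> Z" "q < x" "x - q < x - p"
      using left[unfolded islimpt_approachable, rule_format, of "x - p"] p by (auto simp: dist_real_def)
    ultimately show ?thesis using that[of p q] by auto
  next
    assume right: "x islimpt (Z \<inter> {x<..})"
    then obtain q where q: "q \<in> Z" "x < q" "q - x < e"
      using \<open>e > 0\<close> by (auto simp: islimpt_approachable dist_real_def)
    moreover obtain p where "p \<in> Z" "x < p" "p - x < q - x"
      using right[unfolded islimpt_approachable, rule_format, of "q - x"] q by (auto simp: dist_real_def)
    ultimately show ?thesis using that[of p q] by auto
  qed
  then obtain z where "z \<in> W" "p < z" "z < q"
    using between by blast
  then show "\<exists>z\<in>W. z \<noteq> x \<and> dist z x < e"
    using pq by (intro bexI[of _ z]) (auto simp: dist_real_def)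
qed

lemma deriv_seq_Rolle:
  assumes G: "deriv_seq_on {0..1} G" and "0 \<le> p" "p < q" "q \<le> 1" "G j p = 0" "G j q = 0"
  shows "\<exists>z. p < z \<and> z < q \<and> G (Suc j) z = 0"
proof -
  obtain z where z: "p < z" "z < q" "(*) (G (Suc j) z) = (\<lambda>v. 0)"
  proof (rule exE[OF Rolle_deriv[of p q "G j"]], safe)
    show "continuous_on {p..q} (G j)"
      by (rule continuous_on_subset[OF deriv_seq_on_continuous_on[OF G]]) (use assms in auto)
    show "(G j has_derivative (*) (G (Suc j) x)) (at x)" if "p < x" "x < q" for x
      using deriv_seq_on_interior[OF G, of x j] that assms by (simp add: has_field_derivative_def)
  qed (use assms in auto)
  moreover have "G (Suc j) z = 0"
    using fun_cong[OF z(3), of 1] by simp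
  ultimately show ?thesis by blast
qed

lemma islimpt_zeros_Suc:
  assumes G: "deriv_seq_on {0..1} G" and "x islimpt {y\<in>{0..1}. G j y = 0}"
  shows "x islimpt {y\<in>{0..1}. G (Suc j) y = 0}"
  using assms(2)
proof (rule islimpt_between)
  fix p q assume "p \<in> {y\<in>{0..1}. G j y = 0}" "q \<in> {y\<in>{0..1}. G j y = 0}" "p < q"
  then show "\<exists>z\<in>{y\<in>{0..1}. G (Suc j) y = 0}. p < z \<and> z < q"
    using deriv_seq_Rolle[OF G, of p q j] by fastforce
qed

lemma inf_flat_at_islimpt_zeros:
  assumes G: "deriv_seq_on {0..1} G" and "x islimpt {y\<in>{0..1}. G 0 y = 0}"
  shows "inf_flat_at G x"
  unfolding inf_flat_at_def
proof
  fix j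
  have "x islimpt {y\<in>{0..1}. G j y = 0}"
    by (induction j) (use assms islimpt_zeros_Suc in auto)
  moreover have "closed {y\<in>{0..1}. G j y = 0}"
    by (rule continuous_closed_preimage_constant[OF deriv_seq_on_continuous_on[OF G]]) auto
  ultimately show "G j x = 0"
    using closed_limpt by blast
qed

lemma eventually_nonzero_at_right_0:
  assumes G: "deriv_seq_on {0..1} G" and "\<not> inf_flat_at G 0"
  shows "eventually (\<lambda>x. G 0 x \<noteq> 0) (at_right 0)"
proof -
  have "\<not> (0::real) islimpt {y\<in>{0..1}. G 0 y = 0}"
    using inf_flat_at_islimpt_zeros[OF G] assms(2) by blast
  then have "eventually (\<lambda>y. y \<notin> {y\<in>{0..1}. G 0 y = 0}) (at_right 0)"
    by (simp add: islimpt_iff_eventually eventually_at_split)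
  moreover have "eventually (\<lambda>y. y \<in> {0..1::real}) (at_right 0)"
    by (rule eventually_at_rightI[of 0 1]) auto
  ultimately show ?thesis
    by eventually_elim auto
qed

lemma finite_zeros_if_nowhere_flat:
  assumes G: "deriv_seq_on {0..1} G" and nonflat: "\<forall>x\<in>{0<..<1}. \<not> inf_flat_at G x"
    and at_0: "eventually (\<lambda>x. G 0 x \<noteq> 0) (at_right 0)"
    and at_1: "eventually (\<lambda>x. G 0 x \<noteq> 0) (at_left 1)"
  shows "finite {x\<in>{0..1}. G 0 x = 0}"
proof (rule ccontr)
  let ?Z = "{x\<in>{0..1}. G 0 x = 0}"
  assume "infinite ?Z"
  then obtain x where x: "x \<in> {0..1}" "x islimpt ?Z"
    using compact_eq_Bolzano_Weierstrass[of "{0..1::real}"] by auto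
  then have "x = 0 \<or> x = 1"
    using inf_flat_at_islimpt_zeros[OF G] nonflat by fastforce
  moreover have "eventually (\<lambda>y. y \<notin> ?Z) (at_left 0)" "eventually (\<lambda>y. y \<notin> ?Z) (at_right 0)"
    "eventually (\<lambda>y. y \<notin> ?Z) (at_left 1)" "eventually (\<lambda>y. y \<notin> ?Z) (at_right 1)"
    by (auto intro: eventually_at_leftI[of "-1"] eventually_at_rightI[of 1 2]
        eventually_mono[OF at_0] eventually_mono[OF at_1])
  ultimately show False
    using x(2) by (auto simp: islimpt_iff_eventually eventually_at_split)
qed

section \<open>Size of flat functions near the flat point\<close>

lemma deriv_seq_power_bound_Suc:
  assumes G: "deriv_seq_on {0..1} G" and "G m 0 = 0" "K \<ge> 0" "x \<in> {0..1}"
    and bound: "\<And>y. y \<in> {0..1} \<Longrightarrow> \<bar>G (Suc m) y\<bar> \<le> K * y ^ n"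
  shows "\<bar>G m x\<bar> \<le> K * x ^ Suc n"
proof -
  have "norm (G m x - G m 0) \<le> (K * x ^ n) * norm (x - 0)"
  proof (rule field_differentiable_bound[where S = "{0..x}" and f' = "G (Suc m)"])
    fix z assume z: "z \<in> {0..x}"
    then have "z \<in> {0..1}"
      using assms(4) by auto
    then show "(G m has_field_derivative G (Suc m) z) (at z within {0..x})"
      by (rule has_field_derivative_subset[OF deriv_seq_onD[OF G]]) (use assms(4) in auto)
    have "\<bar>G (Suc m) z\<bar> \<le> K * z ^ n"
      using bound \<open>z \<in> {0..1}\<close> .
    also have "\<dots> \<le> K * x ^ n"
      using z assms(3) by (auto intro!: mult_left_mono power_mono)
    finally show "norm (G (Suc m) z) \<le> K * x ^ n" by simp
  qed (use assms(4) in auto)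
  then show ?thesis
    using assms by (simp add: algebra_simps)
qed

lemma flat_at_0_power_bound:
  assumes G: "deriv_seq_on {0..1} G" and flat: "inf_flat_at G 0"
  shows "\<exists>K\<ge>0. \<forall>m\<le>k. \<forall>x\<in>{0..1}. \<bar>G m x\<bar> \<le> K * x ^ (k + 1 - m)"
proof -
  obtain K where K: "K \<ge> 0" "\<And>x. x \<in> {0..1} \<Longrightarrow> \<bar>G (k + 1) x\<bar> \<le> K"
    using deriv_seq_bounded_on_compact[OF G, of "k + 1"] by auto
  have descend: "\<forall>x\<in>{0..1}. \<bar>G (k + 1 - n) x\<bar> \<le> K * x ^ n" if "n \<le> k + 1" for n
    using that
  proof (induction n)
    case (Suc n)
    then have "Suc (k + 1 - Suc n) = k + 1 - n" by simp
    then show ?case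
      using deriv_seq_power_bound_Suc[OF G _ K(1), of "k + 1 - Suc n"] Suc flat
      by (simp add: inf_flat_at_def)
  qed (use K in simp)
  show ?thesis
  proof (intro exI[of _ K] conjI allI impI ballI)
    fix m x assume "m \<le> k" "x \<in> {0..1::real}"
    then show "\<bar>G m x\<bar> \<le> K * x ^ (k + 1 - m)"
      using descend[of "k + 1 - m"] by simp
  qed (rule K(1))
qed

lemma flat_at_0_uniform_power_bound:
  assumes F: "deriv_seq_on {0..1} F" "inf_flat_at F 0" and G: "deriv_seq_on {0..1} G" "inf_flat_at G 0"
  shows "\<exists>K\<ge>0. \<forall>t. \<bar>t\<bar> \<le> 2 \<longrightarrow> (\<forall>m\<le>k. \<forall>x\<in>{0..1}. \<bar>t * F m x - G m x\<bar> \<le> K * x ^ (k + 1 - m))"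
proof -
  obtain KF where KF: "KF \<ge> 0" "\<forall>m\<le>k. \<forall>x\<in>{0..1}. \<bar>F m x\<bar> \<le> KF * x ^ (k + 1 - m)"
    using flat_at_0_power_bound[OF F] by blast
  obtain KG where KG: "KG \<ge> 0" "\<forall>m\<le>k. \<forall>x\<in>{0..1}. \<bar>G m x\<bar> \<le> KG * x ^ (k + 1 - m)"
    using flat_at_0_power_bound[OF G] by blast
  have "\<bar>t * F m x - G m x\<bar> \<le> (2 * KF + KG) * x ^ (k + 1 - m)"
    if "\<bar>t\<bar> \<le> 2" "m \<le> k" "x \<in> {0..1}" for t m x
  proof -
    have "\<bar>t * F m x\<bar> \<le> 2 * (KF * x ^ (k + 1 - m))"
      using that KF(2) by (auto simp: abs_mult intro: mult_mono)
    moreover have "\<bar>G m x\<bar> \<le> KG * x ^ (k + 1 - m)"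
      using that KG(2) by auto
    ultimately show ?thesis
      by (simp add: algebra_simps abs_triangle_ineq4 order_trans[OF abs_triangle_ineq4])
  qed
  then show ?thesis
    using KF(1) KG(1) by (intro exI[of _ "2 * KF + KG"]) auto
qed

section \<open>Blending with the flat function near \<open>0\<close>\<close>

definition cutoff :: "real \<Rightarrow> nat \<Rightarrow> real \<Rightarrow> real" where
  "cutoff a j x = (1/a) ^ j * smooth_step j ((1/a) * x + - 1)"

lemma deriv_seq_on_cutoff: "deriv_seq_on S (cutoff a)"
  unfolding cutoff_def[abs_def]
  by (rule deriv_seq_on_affine[OF deriv_seq_on_smooth_step[of UNIV]]) simp

lemma cutoff_eq_0: "0 < a \<Longrightarrow> 2 * a \<le> x \<Longrightarrow> cutoff a j x = 0"
  by (simp add: cutoff_def smooth_step_ge_1 field_simps)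

lemma cutoff_near_0: "0 < a \<Longrightarrow> x \<le> a \<Longrightarrow> cutoff a j x = (if j = 0 then 1 else 0)"
  by (simp add: cutoff_def smooth_step_nonpos field_simps)

lemma cutoff_pos: "0 < a \<Longrightarrow> x < 2 * a \<Longrightarrow> cutoff a 0 x > 0"
  by (simp add: cutoff_def smooth_step_pos field_simps)

lemma cutoff_bound: "\<exists>M\<ge>0. \<forall>a>0. \<forall>i\<le>k. \<forall>y\<in>{0..2 * a}. \<bar>cutoff a i y\<bar> \<le> (1/a) ^ i * M"
proof -
  obtain M where M: "M \<ge> 0" "\<And>i z. i \<le> k \<Longrightarrow> z \<in> {-1..1} \<Longrightarrow> \<bar>smooth_step i z\<bar> \<le> M"
    using deriv_seq_bounded_on_compact[OF deriv_seq_on_smooth_step compact_Icc] by blast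
  have "\<bar>cutoff a i y\<bar> \<le> (1/a) ^ i * M" if "a > 0" "i \<le> k" "y \<in> {0..2 * a}" for a i y
  proof -
    have "(1/a) * y + - 1 \<in> {-1..1}"
      using that by (auto simp: field_simps)
    then show ?thesis
      using M(2)[OF that(2)] that(1) by (simp add: cutoff_def abs_mult mult_left_mono)
  qed
  then show ?thesis
    using M(1) by blast
qed

lemma leibniz_prod_cutoff_eq_0: "0 < a \<Longrightarrow> 2 * a \<le> x \<Longrightarrow> leibniz_prod (cutoff a) G j x = 0"
  by (simp add: leibniz_prod_def cutoff_eq_0)

lemma leibniz_prod_cutoff_near_0: "0 < a \<Longrightarrow> x \<le> a \<Longrightarrow> leibniz_prod (cutoff a) G j x = G j x"
  by (simp add: leibniz_prod_def cutoff_near_0 sum.atLeast_Suc_atMost)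

lemma leibniz_prod_scaled_bound:
  assumes a: "0 < a" "2 * a \<le> 1" and "M \<ge> 0" "K \<ge> 0"
    and P: "\<And>i y. i \<le> k \<Longrightarrow> y \<in> {0..2 * a} \<Longrightarrow> \<bar>P i y\<bar> \<le> (1/a) ^ i * M"
    and G: "\<And>m y. m \<le> k \<Longrightarrow> y \<in> {0..1} \<Longrightarrow> \<bar>G m y\<bar> \<le> K * y ^ (k + 1 - m)"
    and "j \<le> k" and x: "x \<in> {0..2 * a}"
  shows "\<bar>leibniz_prod P G j x\<bar> \<le> 4 ^ (k + 1) * M * K * a"
proof -
  define c where "c = M * K * 2 ^ (k + 1) * a"
  have summand: "\<bar>P i x * G (j - i) x\<bar> \<le> c" if "i \<le> j" for i
  proof -
    have "x ^ (k + 1 - (j - i)) \<le> x ^ (i + 1)"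
      using x a that \<open>j \<le> k\<close> by (intro power_decreasing) auto
    also have "\<dots> \<le> (2 * a) ^ (i + 1)"
      using x by (intro power_mono) auto
    finally have power: "x ^ (k + 1 - (j - i)) \<le> (2 * a) ^ (i + 1)" .
    have "\<bar>G (j - i) x\<bar> \<le> K * x ^ (k + 1 - (j - i))"
      using G[of "j - i" x] x a \<open>j \<le> k\<close> by auto
    also have "\<dots> \<le> K * (2 * a) ^ (i + 1)"
      using power \<open>K \<ge> 0\<close> by (rule mult_left_mono)
    finally have "\<bar>P i x\<bar> * \<bar>G (j - i) x\<bar> \<le> ((1/a) ^ i * M) * (K * (2 * a) ^ (i + 1))"
      using P[of i x] that \<open>j \<le> k\<close> x by (intro mult_mono) auto
    also have "\<dots> = M * K * 2 ^ (i + 1) * a"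
      using a by (simp add: power_mult_distrib power_add field_simps)
    also have "\<dots> \<le> c"
      unfolding c_def using that \<open>j \<le> k\<close> a \<open>M \<ge> 0\<close> \<open>K \<ge> 0\<close>
      by (intro mult_right_mono mult_left_mono power_increasing) auto
    finally show ?thesis by (simp add: abs_mult)
  qed
  have "\<bar>leibniz_prod P G j x\<bar> \<le> (\<Sum>i = 0..j. real (j choose i) * \<bar>P i x * G (j - i) x\<bar>)"
    unfolding leibniz_prod_def mult.assoc by (rule order.trans[OF sum_abs]) (simp add: abs_mult)
  also have "\<dots> \<le> (\<Sum>i = 0..j. real (j choose i) * c)"
    using summand by (intro sum_mono mult_left_mono) auto
  also have "\<dots> = 2 ^ j * c"
    using choose_row_sum[of j] by (simp add: atLeast0AtMost flip: sum_distrib_right of_nat_sum)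
  also have "\<dots> \<le> 2 ^ k * c"
    unfolding c_def using \<open>j \<le> k\<close> a \<open>M \<ge> 0\<close> \<open>K \<ge> 0\<close>
    by (intro mult_right_mono power_increasing) auto
  also have "\<dots> = 4 ^ (k + 1) * M * K * a / 2"
    by (simp add: c_def power_add field_simps flip: power_mult_distrib)
  also have "\<dots> \<le> 4 ^ (k + 1) * M * K * a"
    using a \<open>M \<ge> 0\<close> \<open>K \<ge> 0\<close> by simp
  finally show ?thesis .
qed

definition blend_flat_exp :: "real \<Rightarrow> real \<Rightarrow> (nat \<Rightarrow> real \<Rightarrow> real) \<Rightarrow> nat \<Rightarrow> real \<Rightarrow> real" where
  "blend_flat_exp a t D j x = D j x + leibniz_prod (cutoff a) (\<lambda>j x. t * flat_exp j x - D j x) j x"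

lemma deriv_seq_on_blend_flat_exp:
  "deriv_seq_on S D \<Longrightarrow> deriv_seq_on S (blend_flat_exp a t D)"
  unfolding blend_flat_exp_def[abs_def]
  by (intro deriv_seq_on_add deriv_seq_on_leibniz_prod deriv_seq_on_cutoff deriv_seq_on_diff
      deriv_seq_on_cmult deriv_seq_on_flat_exp)

lemma blend_flat_exp_near_0: "0 < a \<Longrightarrow> x \<le> a \<Longrightarrow> blend_flat_exp a t D j x = t * flat_exp j x"
  by (simp add: blend_flat_exp_def leibniz_prod_cutoff_near_0)

lemma blend_flat_exp_far: "0 < a \<Longrightarrow> 2 * a \<le> x \<Longrightarrow> blend_flat_exp a t D j x = D j x"
  by (simp add: blend_flat_exp_def leibniz_prod_cutoff_eq_0)

lemma blend_flat_exp_affine_in_t: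
  "blend_flat_exp a t D j x =
     (D j x - leibniz_prod (cutoff a) D j x) + t * leibniz_prod (cutoff a) flat_exp j x"
  by (simp add: blend_flat_exp_def leibniz_prod_cmult_diff)

lemma exists_blend_flat_exp_no_double_zero:
  assumes D: "deriv_seq_on {0..1} D" and a: "0 < a" "2 * a \<le> 1"
  shows "\<exists>t\<in>{1..2}. \<forall>x\<in>{0<..<2 * a}. blend_flat_exp a t D 0 x = 0 \<longrightarrow> blend_flat_exp a t D 1 x \<noteq> 0"
proof -
  define E where "E j x = D j x - leibniz_prod (cutoff a) D j x" for j x
  define H where "H = leibniz_prod (cutoff a) flat_exp"
  have "deriv_seq_on {0..1} E" "deriv_seq_on {0..1} H"
    unfolding E_def[abs_def] H_def
    by (intro deriv_seq_on_diff deriv_seq_on_leibniz_prod D deriv_seq_on_cutoff deriv_seq_on_flat_exp)+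
  moreover have "{0<..<2 * a} \<subseteq> {0..1}"
    using a by auto
  ultimately have E: "deriv_seq_on {0<..<2 * a} E" and H: "deriv_seq_on {0<..<2 * a} H"
    by (auto intro: deriv_seq_on_subset)
  have "H 0 x \<noteq> 0" if "x \<in> {0<..<2 * a}" for x
    using that a cutoff_pos[of a x] flat_exp_pos[of x] by (simp add: H_def)
  then obtain t where "t \<in> {1..2}" "\<forall>x\<in>{0<..<2 * a}. E 0 x + t * H 0 x = 0 \<longrightarrow> E 1 x + t * H 1 x \<noteq> 0"
    using exists_parameter_no_double_zero[OF deriv_seq_onD[OF E, where j = 0] deriv_seq_onD[OF H, where j = 0], of 1 2]
    by auto
  then show ?thesis
    by (auto simp: blend_flat_exp_affine_in_t E_def H_def)
qed

lemma exists_blend_flat_exp_scale: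
  assumes D: "deriv_seq_on {0..1} D" "inf_flat_at D 0" and "\<epsilon> > 0"
  shows "\<exists>a>0. 4 * a \<le> 1 \<and>
    (\<forall>t\<in>{1..2}. \<forall>j\<le>k. \<forall>x\<in>{0..1}. \<bar>blend_flat_exp a t D j x - D j x\<bar> < \<epsilon>)"
proof -
  obtain M where M: "M \<ge> 0" "\<And>a i y. a > 0 \<Longrightarrow> i \<le> k \<Longrightarrow> y \<in> {0..2 * a} \<Longrightarrow> \<bar>cutoff a i y\<bar> \<le> (1/a) ^ i * M"
    using cutoff_bound[of k] by blast
  obtain K where K: "K \<ge> 0"
    "\<And>t m y. \<bar>t\<bar> \<le> 2 \<Longrightarrow> m \<le> k \<Longrightarrow> y \<in> {0..1} \<Longrightarrow> \<bar>t * flat_exp m y - D m y\<bar> \<le> K * y ^ (k + 1 - m)"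
    using flat_at_0_uniform_power_bound[OF deriv_seq_on_flat_exp inf_flat_at_flat_exp_0 D, of k] by blast
  define C where "C = 4 ^ (k + 1) * (M + 1) * (K + 1)"
  define a where "a = min (1/4) (\<epsilon> / (2 * C))"
  have C: "C > 0" "4 ^ (k + 1) * M * K \<le> C"
    using M(1) K(1) by (auto simp: C_def intro!: mult_mono)
  have a: "0 < a" "4 * a \<le> 1" "C * a < \<epsilon>"
    using C(1) \<open>\<epsilon> > 0\<close> by (auto simp: a_def min_def field_simps)
  have "\<bar>blend_flat_exp a t D j x - D j x\<bar> < \<epsilon>" if "t \<in> {1..2}" "j \<le> k" "x \<in> {0..1}" for t j x
  proof (cases "2 * a \<le> x")
    case True
    then show ?thesis using a \<open>\<epsilon> > 0\<close> by (simp add: blend_flat_exp_far)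
  next
    case False
    then have "\<bar>blend_flat_exp a t D j x - D j x\<bar> \<le> 4 ^ (k + 1) * M * K * a"
      unfolding blend_flat_exp_def add_diff_cancel_left'
      using that a M K by (intro leibniz_prod_scaled_bound[where k = k]) auto
    also have "\<dots> \<le> C * a"
      using C a by (intro mult_right_mono) auto
    finally show ?thesis using a by linarith
  qed
  then show ?thesis
    using a by blast
qed

lemma exists_modification_flat_at_0:
  assumes D: "deriv_seq_on {0..1} D" and nonflat: "\<forall>x\<in>{0<..<1}. \<not> inf_flat_at D x"
    and flat: "inf_flat_at D 0" and "\<epsilon> > 0"
  shows "\<exists>D'. deriv_seq_on {0..1} D' \<and> (\<forall>x\<in>{0<..<1}. \<not> inf_flat_at D' x) \<and>
    (\<forall>j. D' j 0 = D j 0) \<and> (\<forall>j. \<forall>x\<in>{1/2..1}. D' j x = D j x) \<and>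
    eventually (\<lambda>x. D' 0 x \<noteq> 0) (at_right 0) \<and> (\<forall>j\<le>k. \<forall>x\<in>{0..1}. \<bar>D' j x - D j x\<bar> < \<epsilon>)"
proof -
  obtain a where a: "a > 0" "4 * a \<le> 1"
    and close: "\<forall>t\<in>{1..2}. \<forall>j\<le>k. \<forall>x\<in>{0..1}. \<bar>blend_flat_exp a t D j x - D j x\<bar> < \<epsilon>"
    using exists_blend_flat_exp_scale[OF D flat \<open>\<epsilon> > 0\<close>] by blast
  obtain t where t: "t \<in> {1..2}"
    and transversal: "\<forall>x\<in>{0<..<2 * a}. blend_flat_exp a t D 0 x = 0 \<longrightarrow> blend_flat_exp a t D 1 x \<noteq> 0"
    using exists_blend_flat_exp_no_double_zero[OF D a(1)] a by auto
  let ?D' = "blend_flat_exp a t D"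
  have "\<not> inf_flat_at ?D' x" if "x \<in> {0<..<1}" for x
  proof (cases "2 * a \<le> x")
    case True
    then show ?thesis using nonflat that a by (simp add: inf_flat_at_def blend_flat_exp_far)
  next
    case False
    then show ?thesis using transversal that by (auto simp: inf_flat_at_def)
  qed
  moreover have "eventually (\<lambda>x. ?D' 0 x \<noteq> 0) (at_right 0)"
    by (rule eventually_at_rightI[of 0 a])
      (use a t in \<open>auto simp: blend_flat_exp_near_0 flat_exp_def\<close>)
  moreover have "?D' j 0 = D j 0" for j
    using a flat by (simp add: blend_flat_exp_near_0 flat_exp_nonpos inf_flat_at_def)
  ultimately show ?thesis
    using deriv_seq_on_blend_flat_exp[OF D] close t a
    by (intro exI[of _ ?D']) (auto simp: blend_flat_exp_far)
qed

lemma exists_modification_near_0: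
  assumes D: "deriv_seq_on {0..1} D" and nonflat: "\<forall>x\<in>{0<..<1}. \<not> inf_flat_at D x" and "\<epsilon> > 0"
  shows "\<exists>D'. deriv_seq_on {0..1} D' \<and> (\<forall>x\<in>{0<..<1}. \<not> inf_flat_at D' x) \<and>
    (\<forall>j. D' j 0 = D j 0) \<and> (\<forall>j. \<forall>x\<in>{1/2..1}. D' j x = D j x) \<and>
    eventually (\<lambda>x. D' 0 x \<noteq> 0) (at_right 0) \<and> (\<forall>j\<le>k. \<forall>x\<in>{0..1}. \<bar>D' j x - D j x\<bar> < \<epsilon>)"
proof (cases "inf_flat_at D 0")
  case True
  then show ?thesis using exists_modification_flat_at_0[OF D nonflat _ \<open>\<epsilon> > 0\<close>] by blast
next
  case False
  then show ?thesis
    using eventually_nonzero_at_right_0[OF D] D nonflat \<open>\<epsilon> > 0\<close> by (intro exI[of _ D]) auto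
qed

definition reflect01 :: "(nat \<Rightarrow> real \<Rightarrow> real) \<Rightarrow> nat \<Rightarrow> real \<Rightarrow> real" where
  "reflect01 D j x = (- 1) ^ j * D j (1 - x)"

lemma deriv_seq_on_reflect01: "deriv_seq_on {0..1} D \<Longrightarrow> deriv_seq_on {0..1} (reflect01 D)"
  using deriv_seq_on_affine[of "{0..1}" D "- 1" 1 "{0..1}"] by (auto simp: reflect01_def[abs_def])

lemma reflect01_reflect01 [simp]: "reflect01 (reflect01 D) = D"
  by (simp add: reflect01_def fun_eq_iff flip: mult.assoc power_mult_distrib)

lemma abs_reflect01_diff: "\<bar>reflect01 E j x - reflect01 F j x\<bar> = \<bar>E j (1 - x) - F j (1 - x)\<bar>"
  by (simp add: reflect01_def abs_mult flip: right_diff_distrib)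

lemma inf_flat_at_reflect01: "inf_flat_at (reflect01 D) x \<longleftrightarrow> inf_flat_at D (1 - x)"
  by (simp add: inf_flat_at_def reflect01_def)

lemma eventually_at_left_1_reflect:
  assumes "eventually P (at_right 0)"
  shows "eventually (\<lambda>x. P (1 - x)) (at_left (1::real))"
proof -
  obtain b where "b > 0" "\<And>y. 0 < y \<Longrightarrow> y < b \<Longrightarrow> P y"
    using assms by (auto simp: eventually_at_right_field)
  then show ?thesis
    by (intro eventually_at_leftI[of "1 - b"]) auto
qed

lemma exists_modification_near_0_and_1:
  assumes D: "deriv_seq_on {0..1} D" and nonflat: "\<forall>x\<in>{0<..<1}. \<not> inf_flat_at D x" and "\<epsilon> > 0"
  shows "\<exists>D'. deriv_seq_on {0..1} D' \<and> (\<forall>x\<in>{0<..<1}. \<not> inf_flat_at D' x) \<and>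
    (\<forall>j. D' j 0 = D j 0 \<and> D' j 1 = D j 1) \<and>
    eventually (\<lambda>x. D' 0 x \<noteq> 0) (at_right 0) \<and> eventually (\<lambda>x. D' 0 x \<noteq> 0) (at_left 1) \<and>
    (\<forall>j\<le>k. \<forall>x\<in>{0..1}. \<bar>D' j x - D j x\<bar> < \<epsilon>)"
proof -
  have half: "\<epsilon> / 2 > 0"
    using \<open>\<epsilon> > 0\<close> by simp
  obtain D1 where D1: "deriv_seq_on {0..1} D1" "\<forall>x\<in>{0<..<1}. \<not> inf_flat_at D1 x"
    "\<forall>j. D1 j 0 = D j 0" "\<forall>j. \<forall>x\<in>{1/2..1}. D1 j x = D j x"
    "eventually (\<lambda>x. D1 0 x \<noteq> 0) (at_right 0)" "\<forall>j\<le>k. \<forall>x\<in>{0..1}. \<bar>D1 j x - D j x\<bar> < \<epsilon> / 2"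
    using exists_modification_near_0[OF D nonflat half, where k = k] by blast
  have "\<forall>x\<in>{0<..<1}. \<not> inf_flat_at (reflect01 D1) x"
    using D1(2) by (auto simp: inf_flat_at_reflect01)
  then obtain E where E: "deriv_seq_on {0..1} E" "\<forall>x\<in>{0<..<1}. \<not> inf_flat_at E x"
    "\<forall>j. E j 0 = reflect01 D1 j 0" "\<forall>j. \<forall>x\<in>{1/2..1}. E j x = reflect01 D1 j x"
    "eventually (\<lambda>x. E 0 x \<noteq> 0) (at_right 0)"
    "\<forall>j\<le>k. \<forall>x\<in>{0..1}. \<bar>E j x - reflect01 D1 j x\<bar> < \<epsilon> / 2"
    using exists_modification_near_0[OF deriv_seq_on_reflect01[OF D1(1)] _ half, where k = k] by blast
  let ?D' = "reflect01 E"
  have left_half: "?D' j x = D1 j x" if "x \<in> {0..1/2}" for j x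
    using E(4) that by (simp add: reflect01_def)
  have "?D' j 1 = D j 1" for j
    using E(3) D1(4) by (simp add: reflect01_def)
  moreover have "eventually (\<lambda>x. x \<in> {0..1/2::real}) (at_right 0)"
    by (rule eventually_at_rightI[of 0 "1/2"]) auto
  then have "eventually (\<lambda>x. ?D' 0 x \<noteq> 0) (at_right 0)"
    using D1(5) by eventually_elim (simp add: left_half)
  moreover have "eventually (\<lambda>x. ?D' 0 x \<noteq> 0) (at_left 1)"
    using eventually_at_left_1_reflect[OF E(5)] by (simp add: reflect01_def)
  moreover have "\<bar>?D' j x - D j x\<bar> < \<epsilon>" if "j \<le> k" "x \<in> {0..1}" for j x
  proof -
    have "\<bar>?D' j x - D1 j x\<bar> < \<epsilon> / 2"
      using abs_reflect01_diff[of E j x "reflect01 D1"] E(6) that by simp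
    moreover have "\<bar>D1 j x - D j x\<bar> < \<epsilon> / 2"
      using D1(6) that by auto
    ultimately show ?thesis
      using abs_triangle_ineq[of "?D' j x - D1 j x" "D1 j x - D j x"] by simp
  qed
  ultimately show ?thesis
    using deriv_seq_on_reflect01[OF E(1)] E(2) D1(3) left_half[of 0]
    by (intro exI[of _ ?D']) (auto simp: inf_flat_at_reflect01)
qed

theorem lemma4p9:
  fixes nu :: "real \<Rightarrow> real" and D :: "nat \<Rightarrow> real \<Rightarrow> real"
  assumes "smooth_derivs_01 nu D"
    and "\<forall>x\<in>{0<..<1}. \<not> inf_flat_at D x"
  shows "\<forall>\<epsilon>>0. \<forall>k::nat. \<exists>nu' D'. smooth_derivs_01 nu' D' \<and>
           (\<forall>x\<in>{0<..<1}. \<not> inf_flat_at D' x) \<and>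
           (\<forall>j. D' j 0 = D j 0 \<and> D' j 1 = D j 1) \<and>
           finite {x\<in>{0..1}. nu' x = 0} \<and>
           (\<forall>j\<le>k. \<forall>x\<in>{0..1}. \<bar>D' j x - D j x\<bar> < \<epsilon>)"
proof (intro allI impI)
  fix \<epsilon> :: real and k :: nat
  assume "\<epsilon> > 0"
  have "deriv_seq_on {0..1} D"
    using assms(1) by (simp add: smooth_derivs_01_def deriv_seq_on_def)
  then obtain D' where D': "deriv_seq_on {0..1} D'" "\<forall>x\<in>{0<..<1}. \<not> inf_flat_at D' x"
    "\<forall>j. D' j 0 = D j 0 \<and> D' j 1 = D j 1"
    "eventually (\<lambda>x. D' 0 x \<noteq> 0) (at_right 0)" "eventually (\<lambda>x. D' 0 x \<noteq> 0) (at_left 1)"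
    "\<forall>j\<le>k. \<forall>x\<in>{0..1}. \<bar>D' j x - D j x\<bar> < \<epsilon>"
    using exists_modification_near_0_and_1[OF _ assms(2) \<open>\<epsilon> > 0\<close>] by blast
  have "smooth_derivs_01 (D' 0) D'"
    using D'(1) by (simp add: smooth_derivs_01_def deriv_seq_on_def)
  then show "\<exists>nu' D'. smooth_derivs_01 nu' D' \<and> (\<forall>x\<in>{0<..<1}. \<not> inf_flat_at D' x) \<and>
      (\<forall>j. D' j 0 = D j 0 \<and> D' j 1 = D j 1) \<and> finite {x\<in>{0..1}. nu' x = 0} \<and>
      (\<forall>j\<le>k. \<forall>x\<in>{0..1}. \<bar>D' j x - D j x\<bar> < \<epsilon>)"
    using D'(2,3,6) finite_zeros_if_nowhere_flat[OF D'(1,2,4,5)] by (intro exI[of _ "D' 0"] exI[of _ D'] conjI)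
qed

end
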